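(* Write $e^{\arctan z}=1+\sum_{n=1}^{\infty}a_nz^n$ for $|z|<1$, where $\arctan z=\sum_{k\ge0}\frac{(-1)^kz^{2k+1}}{2k+1}$. Equivalently, $(a_n)$ is the real sequence determined by $a_0=1$, $a_1=1$ and $a_n-(n+1)a_{n+1}-(n-1)a_{n-1}=0$ for $n\ge1$. Then $$\sum_{n=1}^{\infty}a_n^2=1+\frac{1}{2^2}+\frac{1}{6^2}+\frac{7^2}{24^2}+\frac{1}{24^2}+\cdots=\frac{e^{\pi/2}+e^{-\pi/2}}{2}-1.$$ *)

theory Defs
  imports Complex_Main
begin

text \<open>Coefficients of exp(arctan z) = sum a_n z^n, given by the recurrence
  a_0 = 1, a_1 = 1, a_n - (n+1) a_(n+1) - (n-1) a_(n-1) = 0 for n >= 1.\<close>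
fun atan_exp_coeff :: "nat \<Rightarrow> real" where
  "atan_exp_coeff 0 = 1"
| "atan_exp_coeff (Suc 0) = 1"
| "atan_exp_coeff (Suc (Suc n)) =
     (atan_exp_coeff (Suc n) - real n * atan_exp_coeff n) / real (n + 2)"

end

theory Submission
  imports Defs "HOL-Analysis.Analysis" "HOL-Real_Asymp.Real_Asymp"
begin

text \<open>
  The recurrence says that f(z) = sum a_n z^n solves (1 + z^2) f' = f with f(0) = 1, hence
  f = exp o arctan on the unit disc. Parseval's identity on the circle |z| = r < 1, combined with
  |exp (arctan z)|^2 = exp (arctan (2 Re z / (1 - |z|^2))), gives
  sum a_n^2 r^(2n) = (1/2pi) integral_{-pi..pi} exp (arctan (2 r cos t / (1 - r^2))) dt.
  As r -> 1 the integrand tends to e^(pi/2) where cos t > 0 and to e^(-pi/2) where cos t < 0, so by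
  dominated convergence the right-hand side tends to cosh (pi/2). The terms a_n^2 being nonnegative,
  this Abel limit is the sum of the series.
\<close>

subsection \<open>The generating function\<close>

lemma abs_atan_exp_coeff_le_1: "\<bar>atan_exp_coeff n\<bar> \<le> 1"
proof (induction n rule: atan_exp_coeff.induct)
  case (3 n)
  have "\<bar>real n * atan_exp_coeff n\<bar> \<le> real n"
    using 3 by (simp add: abs_mult mult_left_le)
  then have "\<bar>atan_exp_coeff (Suc n) - real n * atan_exp_coeff n\<bar> \<le> 1 + real n"
    using 3 abs_triangle_ineq4[of "atan_exp_coeff (Suc n)" "real n * atan_exp_coeff n"] by linarith
  then show ?case by (simp add: divide_le_eq)
qed auto

definition atan_exp_fps :: "complex fps" where
  "atan_exp_fps = Abs_fps (\<lambda>n. of_real (atan_exp_coeff n))"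

lemma fps_nth_atan_exp_fps [simp]: "fps_nth atan_exp_fps n = of_real (atan_exp_coeff n)"
  by (simp add: atan_exp_fps_def)

lemma fps_conv_radius_atan_exp_fps: "1 \<le> fps_conv_radius atan_exp_fps"
  unfolding fps_conv_radius_def
proof (rule conv_radius_geI_ex')
  fix r :: real assume r: "0 < r" "ereal r < 1"
  show "summable (\<lambda>n. fps_nth atan_exp_fps n * of_real r ^ n)"
  proof (rule summable_comparison_test')
    show "summable (\<lambda>n. r ^ n)" using r by simp
    show "norm (fps_nth atan_exp_fps n * of_real r ^ n) \<le> r ^ n" for n
      using abs_atan_exp_coeff_le_1[of n] r by (simp add: norm_mult norm_power mult_left_le_one_le)
  qed
qed

lemma atan_exp_coeff_ode:
  "real (Suc n) * atan_exp_coeff (Suc n)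
     + (if n < 2 then 0 else real (n - 1) * atan_exp_coeff (n - 1)) = atan_exp_coeff n"
proof (cases n rule: atan_exp_coeff.cases)
  case (3 k)
  have "atan_exp_coeff (Suc (Suc (Suc k)))
          = (atan_exp_coeff (Suc (Suc k)) - real (Suc k) * atan_exp_coeff (Suc k)) / real (Suc k + 2)"
    by (rule atan_exp_coeff.simps(3))
  then show ?thesis
    using 3 by (simp add: field_simps del: atan_exp_coeff.simps)
qed simp_all

lemma atan_exp_fps_ode: "fps_deriv atan_exp_fps * (1 + fps_X\<^sup>2) = atan_exp_fps"
proof (rule fps_ext)
  fix n
  have "fps_nth (fps_deriv atan_exp_fps * (1 + fps_X\<^sup>2)) n
          = fps_nth (fps_deriv atan_exp_fps) n + fps_nth (fps_X\<^sup>2 * fps_deriv atan_exp_fps) n"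
    by (simp add: algebra_simps)
  also have "\<dots> = of_real (real (Suc n) * atan_exp_coeff (Suc n)
                     + (if n < 2 then 0 else real (n - 1) * atan_exp_coeff (n - 1)))"
    unfolding fps_X_power_mult_nth
    by (cases "n < 2") (simp_all add: numeral_2_eq_2 Suc_diff_Suc del: atan_exp_coeff.simps)
  finally show "fps_nth (fps_deriv atan_exp_fps * (1 + fps_X\<^sup>2)) n = fps_nth atan_exp_fps n"
    by (simp only: atan_exp_coeff_ode fps_nth_atan_exp_fps)
qed

lemma one_plus_square_nonzero:
  fixes w :: complex
  assumes "norm w < 1"
  shows "1 + w\<^sup>2 \<noteq> 0"
proof
  assume "1 + w\<^sup>2 = 0"
  then have "norm (w\<^sup>2) = 1"
    by (simp add: add_eq_0_iff)
  moreover have "norm (w\<^sup>2) < 1"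
    using assms by (simp add: norm_power abs_square_less_1)
  ultimately show False
    by simp
qed

lemma eq_exp_Arctan_if_deriv:
  fixes f :: "complex \<Rightarrow> complex"
  assumes deriv: "\<And>w. norm w < 1 \<Longrightarrow> (f has_field_derivative f w / (1 + w\<^sup>2)) (at w)"
    and f0: "f 0 = 1" and z: "norm z < 1"
  shows "f z = exp (Arctan z)"
proof -
  define h where "h w = f w * exp (- Arctan w)" for w
  have "(h has_field_derivative 0) (at w within ball 0 1)" if "w \<in> ball 0 1" for w
  proof -
    have w: "norm w < 1" using that by simp
    have "\<bar>Im w\<bar> < 1"
      using abs_Im_le_cmod[of w] w by linarith
    then have "(h has_field_derivative f w / (1 + w\<^sup>2) * exp (- Arctan w)
                  + f w * (exp (- Arctan w) * - inverse (1 + w\<^sup>2))) (at w)"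
      unfolding h_def by (auto intro!: derivative_eq_intros deriv w)
    also have "f w / (1 + w\<^sup>2) * exp (- Arctan w)
                 + f w * (exp (- Arctan w) * - inverse (1 + w\<^sup>2)) = 0"
      by (simp add: field_simps)
    finally show ?thesis
      by (rule has_field_derivative_at_within)
  qed
  then obtain c where c: "\<And>w. w \<in> ball 0 1 \<Longrightarrow> h w = c"
    using has_field_derivative_zero_constant[of "ball 0 1" h] by auto
  have "h z = h 0"
    using c[of z] c[of 0] z by simp
  also have "h 0 = 1"
    by (simp add: h_def f0)
  finally show ?thesis
    by (simp add: h_def exp_minus field_simps)
qed

lemma eval_atan_exp_fps:
  assumes z: "norm z < 1"
  shows "eval_fps atan_exp_fps z = exp (Arctan z)"
proof (rule eq_exp_Arctan_if_deriv[OF _ _ z])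
  fix w :: complex
  assume w: "norm w < 1"
  have "ereal (norm w) < 1"
    using w by (simp add: one_ereal_def)
  then have radius: "norm w < fps_conv_radius atan_exp_fps"
    using fps_conv_radius_atan_exp_fps by (rule less_le_trans)
  have "eval_fps atan_exp_fps w = eval_fps (fps_deriv atan_exp_fps * (1 + fps_X\<^sup>2)) w"
    by (simp only: atan_exp_fps_ode)
  also have "\<dots> = eval_fps (fps_deriv atan_exp_fps) w * (1 + w\<^sup>2)"
    using radius fps_conv_radius_deriv[of atan_exp_fps] fps_conv_radius_add[of "1 :: complex fps" "fps_X\<^sup>2"]
    by (subst eval_fps_mult) (auto simp: eval_fps_add intro: less_le_trans)
  finally have "eval_fps (fps_deriv atan_exp_fps) w = eval_fps atan_exp_fps w / (1 + w\<^sup>2)"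
    using one_plus_square_nonzero[OF w] by (simp add: field_simps)
  with has_field_derivative_eval_fps[OF radius]
  show "(eval_fps atan_exp_fps has_field_derivative eval_fps atan_exp_fps w / (1 + w\<^sup>2)) (at w)"
    by simp
qed (simp add: eval_fps_at_0)

lemma Re_Arctan_eq:
  assumes z: "norm z < 1"
  shows "Re (Arctan z) = arctan (2 * Re z / (1 - (norm z)\<^sup>2)) / 2"
proof -
  define w where "w = (1 - \<i> * z) / (1 + \<i> * z)"
  have "norm (\<i> * z) < 1"
    using z by (simp add: norm_mult)
  then have "1 + \<i> * z \<noteq> 0"
    by (auto simp: add_eq_0_iff)
  then have denom: "0 < (norm (1 + \<i> * z))\<^sup>2"
    by simp
  have "(norm z)\<^sup>2 < 1"
    using z by (simp add: abs_square_less_1)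
  then have num: "0 < 1 - (norm z)\<^sup>2"
    by simp
  have Re_w: "Re w = (1 - (norm z)\<^sup>2) / (norm (1 + \<i> * z))\<^sup>2"
    unfolding w_def Re_divide cmod_power2 by (simp add: algebra_simps power2_eq_square)
  have "Im w = (- Re z * (1 - Im z) - (1 + Im z) * Re z) / (norm (1 + \<i> * z))\<^sup>2"
    unfolding w_def Im_divide cmod_power2 by simp
  also have "- Re z * (1 - Im z) - (1 + Im z) * Re z = - 2 * Re z"
    by (simp add: algebra_simps)
  finally have Im_w: "Im w = - 2 * Re z / (norm (1 + \<i> * z))\<^sup>2" .
  have Re_w_pos: "0 < Re w"
    using Re_w denom num by simp
  then have "w \<noteq> 0"
    by auto
  then have "Im (Ln w) = arctan (Im w / Re w)"
    using Arg_eq_Im_Ln arg_conv_arctan[OF Re_w_pos] by simp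
  also have "Im w / Re w = - (2 * Re z / (1 - (norm z)\<^sup>2))"
    using denom by (simp add: Re_w Im_w divide_divide_times_eq)
  finally have "Im (Ln w) = - arctan (2 * Re z / (1 - (norm z)\<^sup>2))"
    by (simp add: arctan_minus)
  moreover have "Arctan z = \<i> / 2 * Ln w"
    by (simp add: Arctan_def w_def)
  then have "Re (Arctan z) = - Im (Ln w) / 2"
    by (simp only:) simp
  ultimately show ?thesis
    by simp
qed

lemma norm_exp_Arctan_squared:
  assumes "norm z < 1"
  shows "(norm (exp (Arctan z)))\<^sup>2 = exp (arctan (2 * Re z / (1 - (norm z)\<^sup>2)))"
  using Re_Arctan_eq[OF assms] by (simp add: power2_eq_square exp_add[symmetric])

subsection \<open>Parseval's identity\<close>

lemma has_integral_cos_int_mult: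
  fixes k :: int
  shows "((\<lambda>t. cos (of_int k * t)) has_integral (if k = 0 then 2 * pi else 0)) {-pi..pi}"
proof (cases "k = 0")
  case True
  then show ?thesis
    using has_integral_const_real[of "1::real" "-pi" pi] by simp
next
  case False
  have "((\<lambda>t. cos (of_int k * t)) has_integral
          sin (of_int k * pi) / of_int k - sin (of_int k * - pi) / of_int k) {-pi..pi}"
  proof (rule fundamental_theorem_of_calculus)
    fix t
    show "((\<lambda>t. sin (of_int k * t) / of_int k) has_vector_derivative cos (of_int k * t))
            (at t within {-pi..pi})"
      using False
      by (auto intro!: derivative_eq_intros simp: has_real_derivative_iff_has_vector_derivative[symmetric])
  qed simp
  moreover have "sin (of_int k * pi) = 0"
    by (metis mult.commute sin_npi_int)
  ultimately show ?thesis
    using False by simp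
qed

lemma norm_sum_cis_squared:
  fixes c :: "nat \<Rightarrow> real"
  shows "(norm (\<Sum>n<N. of_real (c n) * cis (real n * t)))\<^sup>2
           = (\<Sum>n<N. \<Sum>m<N. c n * c m * cos (of_int (int n - int m) * t))"
proof -
  let ?S = "\<Sum>n<N. of_real (c n) * cis (real n * t)"
  have "(norm ?S)\<^sup>2 = Re (?S * cnj ?S)"
    by (metis Re_complex_of_real complex_norm_square)
  also have "?S * cnj ?S
      = (\<Sum>n<N. \<Sum>m<N. of_real (c n) * cis (real n * t) * (of_real (c m) * cis (- (real m * t))))"
    by (simp add: sum_product cis_cnj)
  also have "Re \<dots> = (\<Sum>n<N. \<Sum>m<N. c n * c m * cos (of_int (int n - int m) * t))"
    by (simp add: cis_mult algebra_simps)
  finally show ?thesis .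
qed

lemma has_integral_norm_sum_cis_squared:
  fixes c :: "nat \<Rightarrow> real"
  shows "((\<lambda>t. (norm (\<Sum>n<N. of_real (c n) * cis (real n * t)))\<^sup>2) has_integral
           2 * pi * (\<Sum>n<N. (c n)\<^sup>2)) {-pi..pi}"
proof -
  have "((\<lambda>t. \<Sum>n<N. \<Sum>m<N. c n * c m * cos (of_int (int n - int m) * t)) has_integral
          (\<Sum>n<N. \<Sum>m<N. c n * c m * (if int n - int m = 0 then 2 * pi else 0))) {-pi..pi}"
    by (intro has_integral_sum has_integral_mult_right has_integral_cos_int_mult finite_lessThan)
  also have "(\<Sum>n<N. \<Sum>m<N. c n * c m * (if int n - int m = 0 then 2 * pi else 0))
               = (\<Sum>n<N. \<Sum>m<N. if m = n then 2 * pi * (c n)\<^sup>2 else 0)"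
    by (intro sum.cong) (auto simp: power2_eq_square)
  also have "\<dots> = 2 * pi * (\<Sum>n<N. (c n)\<^sup>2)"
    by (simp add: sum_distrib_left)
  finally show ?thesis
    by (simp only: norm_sum_cis_squared)
qed

lemma parseval_abs_summable:
  fixes c :: "nat \<Rightarrow> real"
  assumes summable: "summable (\<lambda>n. \<bar>c n\<bar>)"
  shows "(\<lambda>n. (c n)\<^sup>2) sums
           (integral {-pi..pi} (\<lambda>t. (norm (\<Sum>n. of_real (c n) * cis (real n * t)))\<^sup>2) / (2 * pi))"
proof -
  define f where "f N t = (norm (\<Sum>n<N. of_real (c n) * cis (real n * t)))\<^sup>2" for N t
  define g where "g t = (norm (\<Sum>n. of_real (c n) * cis (real n * t)))\<^sup>2" for t
  have norm_term: "norm (of_real (c n) * cis (real n * t)) = \<bar>c n\<bar>" for n t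
    by (simp add: norm_mult)
  have "(\<lambda>N. f N t) \<longlonglongrightarrow> g t" for t
  proof -
    have "summable (\<lambda>n. norm (of_real (c n) * cis (real n * t) :: complex))"
      using summable by (simp only: norm_term)
    then have "summable (\<lambda>n. of_real (c n) * cis (real n * t) :: complex)"
      by (rule summable_norm_cancel)
    then show ?thesis
      unfolding f_def g_def by (intro tendsto_power tendsto_norm summable_LIMSEQ)
  qed
  moreover have "norm (f N t) \<le> (\<Sum>n. \<bar>c n\<bar>)\<^sup>2" for N t
  proof -
    have "norm (\<Sum>n<N. of_real (c n) * cis (real n * t)) \<le> (\<Sum>n<N. \<bar>c n\<bar>)"
      using norm_sum[of "\<lambda>n. of_real (c n) * cis (real n * t)" "{..<N}"] by (simp only: norm_term)
    also have "\<dots> \<le> (\<Sum>n. \<bar>c n\<bar>)"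
      using summable by (intro sum_le_suminf) auto
    finally have "(norm (\<Sum>n<N. of_real (c n) * cis (real n * t)))\<^sup>2 \<le> (\<Sum>n. \<bar>c n\<bar>)\<^sup>2"
      by (intro power_mono) simp_all
    then show ?thesis
      by (simp add: f_def)
  qed
  moreover have "(f N) integrable_on {-pi..pi}" for N
    unfolding f_def by (rule has_integral_integrable[OF has_integral_norm_sum_cis_squared])
  ultimately have "(\<lambda>N. integral {-pi..pi} (f N)) \<longlonglongrightarrow> integral {-pi..pi} g"
    by (intro dominated_convergence(2)[where h = "\<lambda>_. (\<Sum>n. \<bar>c n\<bar>)\<^sup>2"]) auto
  moreover have "integral {-pi..pi} (f N) = 2 * pi * (\<Sum>n<N. (c n)\<^sup>2)" for N
    unfolding f_def using has_integral_norm_sum_cis_squared by (rule integral_unique)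
  ultimately have "(\<lambda>N. 2 * pi * (\<Sum>n<N. (c n)\<^sup>2)) \<longlonglongrightarrow> integral {-pi..pi} g"
    by simp
  then have "(\<lambda>N. 2 * pi * (\<Sum>n<N. (c n)\<^sup>2) / (2 * pi)) \<longlonglongrightarrow> integral {-pi..pi} g / (2 * pi)"
    by (intro tendsto_divide tendsto_const) simp_all
  then show ?thesis
    unfolding sums_def g_def by simp
qed

lemma atan_exp_coeff_squared_weighted_sums:
  assumes r: "0 \<le> r" "r < 1"
  shows "(\<lambda>n. (atan_exp_coeff n)\<^sup>2 * (r\<^sup>2) ^ n) sums
           (integral {-pi..pi} (\<lambda>t. exp (arctan (2 * r / (1 - r\<^sup>2) * cos t))) / (2 * pi))"
proof -
  define c where "c n = atan_exp_coeff n * r ^ n" for n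
  have "summable (\<lambda>n. \<bar>c n\<bar>)"
  proof (rule summable_comparison_test')
    show "summable (\<lambda>n. r ^ n)"
      using r by simp
    show "norm \<bar>c n\<bar> \<le> r ^ n" for n
      using abs_atan_exp_coeff_le_1[of n] r by (simp add: c_def abs_mult mult_left_le_one_le)
  qed
  then have "(\<lambda>n. (c n)\<^sup>2) sums
               (integral {-pi..pi} (\<lambda>t. (norm (\<Sum>n. of_real (c n) * cis (real n * t)))\<^sup>2) / (2 * pi))"
    by (rule parseval_abs_summable)
  moreover have "(norm (\<Sum>n. of_real (c n) * cis (real n * t)))\<^sup>2
                   = exp (arctan (2 * r / (1 - r\<^sup>2) * cos t))" for t
  proof -
    define z where "z = of_real r * cis t"
    have norm_z: "norm z = r"
      using r by (simp add: z_def norm_mult)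
    have "(\<Sum>n. of_real (c n) * cis (real n * t)) = eval_fps atan_exp_fps z"
      by (simp add: eval_fps_def z_def c_def power_mult_distrib Complex.DeMoivre mult.assoc)
    also have "\<dots> = exp (Arctan z)"
      using norm_z r by (intro eval_atan_exp_fps) simp
    finally have "(norm (\<Sum>n. of_real (c n) * cis (real n * t)))\<^sup>2 = (norm (exp (Arctan z)))\<^sup>2"
      by (simp only:)
    also have "\<dots> = exp (arctan (2 * Re z / (1 - (norm z)\<^sup>2)))"
      using norm_z r by (intro norm_exp_Arctan_squared) simp
    also have "\<dots> = exp (arctan (2 * r / (1 - r\<^sup>2) * cos t))"
      unfolding norm_z by (simp add: z_def mult.assoc)
    finally show ?thesis .
  qed
  moreover have "(c n)\<^sup>2 = (atan_exp_coeff n)\<^sup>2 * (r\<^sup>2) ^ n" for n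
    by (simp add: c_def power_mult_distrib power_mult[symmetric] mult.commute)
  ultimately show ?thesis
    by simp
qed

subsection \<open>The limit at the boundary of the disc\<close>

lemma tendsto_arctan_mult_at_top:
  fixes s :: "'a \<Rightarrow> real"
  assumes s: "filterlim s at_top F"
  shows "((\<lambda>k. arctan (s k * x)) \<longlongrightarrow> sgn x * pi / 2) F"
proof (cases x "0 :: real" rule: linorder_cases)
  case less
  have "filterlim (\<lambda>k. x * s k) at_bot F"
    using less by (intro filterlim_tendsto_neg_mult_at_bot[OF tendsto_const _ s])
  from filterlim_compose[OF tendsto_arctan_at_bot this] less show ?thesis
    by (simp add: mult.commute)
next
  case greater
  have "filterlim (\<lambda>k. x * s k) at_top F"
    using greater by (intro filterlim_tendsto_pos_mult_at_top[OF tendsto_const _ s])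
  from filterlim_compose[OF tendsto_arctan_at_top this] greater show ?thesis
    by (simp add: mult.commute)
qed simp

lemma has_integral_exp_sgn_cos:
  "((\<lambda>t. exp (sgn (cos t) * pi / 2)) has_integral pi * (exp (pi / 2) + exp (- (pi / 2)))) {-pi..pi}"
proof -
  let ?f = "\<lambda>t. exp (sgn (cos t) * pi / 2)"
  have left: "(?f has_integral pi / 2 * exp (- (pi / 2))) {-pi..-(pi / 2)}"
  proof (rule has_integral_spike_finite[of "{-(pi / 2)}"])
    show "((\<lambda>t. exp (- (pi / 2))) has_integral pi / 2 * exp (- (pi / 2))) {-pi..-(pi / 2)}"
      using has_integral_const_real[of "exp (- (pi / 2))" "-pi" "-(pi / 2)"] by simp
    fix t
    assume "t \<in> {-pi..-(pi / 2)} - {-(pi / 2)}"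
    then have "cos (- t) < 0"
      by (intro cos_lt_zero_pi) auto
    then show "?f t = exp (- (pi / 2))"
      by simp
  qed simp
  have middle: "(?f has_integral pi * exp (pi / 2)) {-(pi / 2)..pi / 2}"
  proof (rule has_integral_spike_finite[of "{-(pi / 2), pi / 2}"])
    show "((\<lambda>t. exp (pi / 2)) has_integral pi * exp (pi / 2)) {-(pi / 2)..pi / 2}"
      using has_integral_const_real[of "exp (pi / 2)" "-(pi / 2)" "pi / 2"] by simp
    fix t
    assume "t \<in> {-(pi / 2)..pi / 2} - {-(pi / 2), pi / 2}"
    then have "cos t > 0"
      by (intro cos_gt_zero_pi) auto
    then show "?f t = exp (pi / 2)"
      by simp
  qed simp
  have right: "(?f has_integral pi / 2 * exp (- (pi / 2))) {pi / 2..pi}"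
  proof (rule has_integral_spike_finite[of "{pi / 2}"])
    show "((\<lambda>t. exp (- (pi / 2))) has_integral pi / 2 * exp (- (pi / 2))) {pi / 2..pi}"
      using has_integral_const_real[of "exp (- (pi / 2))" "pi / 2" pi] by simp
    fix t
    assume "t \<in> {pi / 2..pi} - {pi / 2}"
    then have "cos t < 0"
      by (intro cos_lt_zero_pi) auto
    then show "?f t = exp (- (pi / 2))"
      by simp
  qed simp
  have left_middle: "(?f has_integral pi / 2 * exp (- (pi / 2)) + pi * exp (pi / 2)) {-pi..pi / 2}"
    by (rule has_integral_combine[OF _ _ left middle]) auto
  have "(?f has_integral pi / 2 * exp (- (pi / 2)) + pi * exp (pi / 2)
                + pi / 2 * exp (- (pi / 2))) {-pi..pi}"
    by (rule has_integral_combine[OF _ _ left_middle right]) auto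
  then show ?thesis
    by (simp add: algebra_simps)
qed

lemma tendsto_integral_exp_arctan_mult_cos:
  assumes s: "filterlim s at_top sequentially"
  shows "(\<lambda>k. integral {-pi..pi} (\<lambda>t. exp (arctan (s k * cos t))))
           \<longlonglongrightarrow> pi * (exp (pi / 2) + exp (- (pi / 2)))"
proof -
  have "(\<lambda>k. integral {-pi..pi} (\<lambda>t. exp (arctan (s k * cos t))))
          \<longlonglongrightarrow> integral {-pi..pi} (\<lambda>t. exp (sgn (cos t) * pi / 2))"
  proof (rule dominated_convergence(2)[where h = "\<lambda>_. exp (pi / 2)"])
    show "(\<lambda>t. exp (arctan (s k * cos t))) integrable_on {-pi..pi}" for k
      by (intro integrable_continuous_interval continuous_intros)
    show "norm (exp (arctan (s k * cos t))) \<le> exp (pi / 2)" for k t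
      using arctan_ubound[of "s k * cos t"] by simp
    show "(\<lambda>k. exp (arctan (s k * cos t))) \<longlonglongrightarrow> exp (sgn (cos t) * pi / 2)" for t
      by (intro tendsto_exp tendsto_arctan_mult_at_top s)
  qed auto
  then show ?thesis
    using has_integral_exp_sgn_cos by (simp add: integral_unique)
qed

lemma sums_if_weighted_sums_tendsto:
  fixes f w S :: "nat \<Rightarrow> real"
  assumes f: "\<And>n. 0 \<le> f n"
    and w: "\<And>k. 0 \<le> w k" "\<And>k. w k \<le> 1" "w \<longlonglongrightarrow> 1"
    and S: "\<And>k. (\<lambda>n. f n * w k ^ n) sums S k" and lim: "S \<longlonglongrightarrow> C"
  shows "f sums C"
proof -
  have partial: "(\<Sum>n<N. f n) \<le> C" for N
  proof -
    have "(\<lambda>k. \<Sum>n<N. f n * w k ^ n) \<longlonglongrightarrow> (\<Sum>n<N. f n * 1 ^ n)"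
      by (intro tendsto_intros w)
    moreover have "(\<Sum>n<N. f n * w k ^ n) \<le> S k" for k
      using sums_summable[OF S[of k]] f w sums_unique[OF S[of k]] by (auto intro!: sum_le_suminf)
    ultimately show ?thesis
      using lim by (intro LIMSEQ_le) auto
  qed
  then have summable: "summable f"
    using f by (intro summableI_nonneg_bounded)
  have "S k \<le> suminf f" for k
  proof (rule sums_le[OF _ S[of k] summable_sums[OF summable]])
    show "f n * w k ^ n \<le> f n" for n
      using f[of n] w(1,2)[of k] by (simp add: mult_left_le power_le_one)
  qed
  then have "C \<le> suminf f"
    using lim by (intro LIMSEQ_le_const2) auto
  moreover have "suminf f \<le> C"
    using summable partial by (rule suminf_le_const)
  ultimately show ?thesis
    using summable by (simp add: sums_iff)
qed

theorem mainTheorem6: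
  shows "(\<lambda>n. (atan_exp_coeff (Suc n))\<^sup>2) sums ((exp (pi / 2) + exp (- (pi / 2))) / 2 - 1)"
proof -
  define C where "C = (exp (pi / 2) + exp (- (pi / 2))) / 2"
  define r where "r k = real k / real (Suc k)" for k
  define I where "I k = integral {-pi..pi} (\<lambda>t. exp (arctan (2 * r k / (1 - (r k)\<^sup>2) * cos t)))" for k
  have r: "0 \<le> r k" "r k < 1" for k
    by (simp_all add: r_def)
  have "filterlim (\<lambda>k. 2 * r k / (1 - (r k)\<^sup>2)) at_top sequentially"
    unfolding r_def by real_asymp
  then have I_lim: "I \<longlonglongrightarrow> pi * (exp (pi / 2) + exp (- (pi / 2)))"
    unfolding I_def by (rule tendsto_integral_exp_arctan_mult_cos)
  moreover have "pi * (exp (pi / 2) + exp (- (pi / 2))) / (2 * pi) = C"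
    by (simp add: C_def)
  ultimately have S_lim: "(\<lambda>k. I k / (2 * pi)) \<longlonglongrightarrow> C"
    using tendsto_divide[OF I_lim tendsto_const, of "2 * pi"] by simp
  have w_lim: "(\<lambda>k. (r k)\<^sup>2) \<longlonglongrightarrow> 1"
    unfolding r_def by real_asymp
  have "(\<lambda>n. (atan_exp_coeff n)\<^sup>2) sums C"
  proof (rule sums_if_weighted_sums_tendsto[where w = "\<lambda>k. (r k)\<^sup>2" and S = "\<lambda>k. I k / (2 * pi)"])
    show "(\<lambda>n. (atan_exp_coeff n)\<^sup>2 * ((r k)\<^sup>2) ^ n) sums (I k / (2 * pi))" for k
      unfolding I_def by (rule atan_exp_coeff_squared_weighted_sums[OF r])
    show "(r k)\<^sup>2 \<le> 1" for k
      using r[of k] by (simp add: power_le_one)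
  qed (simp_all add: S_lim w_lim)
  then show ?thesis
    by (subst sums_Suc_iff) (simp add: C_def)
qed

end
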